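(* Let $B\ge 2$ and $\eta\in\mathbb{N}$. Then $t_{\eta+1}\;\ge\;\left\lfloor\dfrac{\gamma_B(\eta)}{(B-1)^2}\right\rfloor-(2B-4)$.
   Context: Fix an integer base $B \geq 2$. Every integer $x>0$ is written uniquely as $x=\sum_{i=0}^{L(x)-1} x_i B^i$ with digits $0 \le x_i \le B-1$ and $x_{L(x)-1}\neq 0$. Define $\mathcal{H}_B(x)=\sum_{i=0}^{L(x)-1} x_i^2$, $\mathcal{H}_B(0)=0$, $\mathcal{H}_B^0(x)=x$, $\mathcal{H}_B^{n}=\mathcal{H}_B\circ\mathcal{H}_B^{n-1}$. A positive integer $x$ is happy if $\mathcal{H}_B^n(x)=1$ for some $n\in\mathbb{N}$; its height is $\eta_B(x)=\min\{\alpha\in\mathbb{N}:\mathcal{H}_B^\alpha(x)=1\}$. For $n\in\mathbb{N}$, $\gamma_B(n)$ denotes the smallest happy number $x\ge 1$ with $\eta_B(x)=n$. For each $n$, $L_n=L(\gamma_B(n))$ is the number of base-$B$ digits of $\gamma_B(n)$, $t_n$ is the number of those digits equal to $B-1$, and $\alpha_n=L_n-t_n$ is the number of digits smaller than $B-1$. $\lfloor\cdot\rfloor$ is the integer part. *)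

theory Defs
  imports Complex_Main
begin

definition digit :: "nat \<Rightarrow> nat \<Rightarrow> nat \<Rightarrow> nat" where
  "digit B x i = x div B ^ i mod B"

text \<open>Number of base-B digits L(x) of x > 0: the least n with x < B^n
  (so that the digit at position L(x)-1 is nonzero). L(0) = 0.\<close>
definition numdigits :: "nat \<Rightarrow> nat \<Rightarrow> nat" where
  "numdigits B x = (LEAST n. x < B ^ n)"

definition H :: "nat \<Rightarrow> nat \<Rightarrow> nat" where
  "H B x = (\<Sum>i<numdigits B x. (digit B x i)^2)"

definition happy :: "nat \<Rightarrow> nat \<Rightarrow> bool" where
  "happy B x \<longleftrightarrow> x > 0 \<and> (\<exists>n. (H B ^^ n) x = 1)"

definition height :: "nat \<Rightarrow> nat \<Rightarrow> nat" where
  "height B x = (LEAST a. (H B ^^ a) x = 1)"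

definition gamma :: "nat \<Rightarrow> nat \<Rightarrow> nat" where
  "gamma B n = (LEAST x. x \<ge> 1 \<and> happy B x \<and> height B x = n)"

definition tcount :: "nat \<Rightarrow> nat \<Rightarrow> nat" where
  "tcount B n = card {i. i < numdigits B (gamma B n) \<and> digit B (gamma B n) i = B - 1}"

end

theory Submission
  imports Defs
begin

text \<open>
  Let x = gamma B (n + 1). Then H x is happy of height n, so gamma B n \<le> H x, and every
  digit of x contributes at most (B - 2)^2 to H x unless it equals B - 1, in which case it
  contributes (B - 2)^2 + (2B - 3). Hence it suffices to bound the number of digits of x:
  writing gamma B n = q (B - 1)^2 + r with r < (B - 1)^2, we exhibit a number with q + 4 digits
  whose digit squares sum to gamma B n. It is not 1, so it has height n + 1 and x is at most it.
  Such a digit string is obtained from q + 4 digits B - 1 by lowering one digit by p, h digits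
  by 2 and g digits by 1; the parameters are found by solving the required total decrease
  4(B - 1)^2 - r modulo 2B - 3 (the decrease caused by lowering a digit by 1).
\<close>

fun of_digits :: "nat \<Rightarrow> nat list \<Rightarrow> nat" where
  "of_digits B [] = 0"
| "of_digits B (d # ds) = d + B * of_digits B ds"

lemma of_digits_less:
  assumes "\<forall>d\<in>set ds. d < B"
  shows "of_digits B ds < B ^ length ds"
  using assms
proof (induction ds)
  case Nil
  then show ?case by simp
next
  case (Cons d ds)
  then have "d < B" and "of_digits B ds + 1 \<le> B ^ length ds" by auto
  then have "d + B * of_digits B ds < B * (of_digits B ds + 1)" by simp
  also have "\<dots> \<le> B * B ^ length ds"
    using \<open>of_digits B ds + 1 \<le> _\<close> by (rule mult_le_mono2)
  finally show ?case by simp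
qed

lemma power_le_of_digits:
  assumes "B \<ge> 1" and "ds \<noteq> []" and "last ds \<noteq> 0"
  shows "B ^ (length ds - 1) \<le> of_digits B ds"
  using assms
proof (induction ds)
  case Nil
  then show ?case by simp
next
  case (Cons d ds)
  show ?case
  proof (cases "ds = []")
    case True
    then show ?thesis using Cons.prems by simp
  next
    case False
    then have "B ^ (length ds - 1) \<le> of_digits B ds"
      using Cons by simp
    then have "B * B ^ (length ds - 1) \<le> B * of_digits B ds"
      by (rule mult_le_mono2)
    moreover have "B * B ^ (length ds - 1) = B ^ (length (d # ds) - 1)"
      using False by (cases ds) auto
    ultimately have "B ^ (length (d # ds) - 1) \<le> B * of_digits B ds" by linarith
    then show ?thesis by simp
  qed
qed

lemma digit_of_digits:
  assumes "B > 0" and "\<forall>d\<in>set ds. d < B" and "i < length ds"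
  shows "digit B (of_digits B ds) i = ds ! i"
  using assms(2,3)
proof (induction ds arbitrary: i)
  case Nil
  then show ?case by simp
next
  case (Cons d ds)
  show ?case
  proof (cases i)
    case 0
    then show ?thesis using Cons.prems by (simp add: digit_def)
  next
    case (Suc j)
    have "of_digits B (d # ds) div B = of_digits B ds"
      using Cons.prems assms(1) by simp
    then have "digit B (of_digits B (d # ds)) i = digit B (of_digits B ds) j"
      using Suc by (simp add: digit_def div_mult2_eq)
    then show ?thesis using Cons Suc by simp
  qed
qed

lemma numdigits_le: "x < B ^ n \<Longrightarrow> numdigits B x \<le> n"
  unfolding numdigits_def by (rule Least_le)

lemma numdigits_of_digits:
  assumes "B \<ge> 2" and "\<forall>d\<in>set ds. d < B" and "ds \<noteq> []" and "last ds \<noteq> 0"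
  shows "numdigits B (of_digits B ds) = length ds"
proof (rule antisym)
  show "numdigits B (of_digits B ds) \<le> length ds"
    using of_digits_less[OF assms(2)] by (rule numdigits_le)
  show "length ds \<le> numdigits B (of_digits B ds)"
  proof (rule ccontr)
    assume "\<not> length ds \<le> numdigits B (of_digits B ds)"
    moreover have "of_digits B ds < B ^ numdigits B (of_digits B ds)"
      unfolding numdigits_def using of_digits_less[OF assms(2)] by (rule LeastI)
    moreover have "B ^ (length ds - 1) \<le> of_digits B ds"
      using assms by (intro power_le_of_digits) auto
    ultimately show False
      using assms(1) power_increasing[of "numdigits B (of_digits B ds)" "length ds - 1" B]
      by linarith
  qed
qed

lemma H_of_digits:
  assumes "B \<ge> 2" and "\<forall>d\<in>set ds. d < B" and "ds \<noteq> []" and "last ds \<noteq> 0"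
  shows "H B (of_digits B ds) = (\<Sum>d\<leftarrow>ds. d^2)"
proof -
  have "H B (of_digits B ds) = (\<Sum>i<length ds. (ds ! i)^2)"
    unfolding H_def using numdigits_of_digits[OF assms] digit_of_digits assms by simp
  also have "\<dots> = (\<Sum>d\<leftarrow>ds. d^2)"
    by (simp add: sum_list_sum_nth atLeast0LessThan)
  finally show ?thesis .
qed

lemma H_0: "H B 0 = 0"
proof -
  have "numdigits B 0 = 0" using numdigits_le[of 0 B 0] by simp
  then show ?thesis by (simp add: H_def)
qed

lemma H_le_digit_count:
  assumes "B \<ge> 2"
  shows "H B x \<le> (B - 2)^2 * numdigits B x
           + (2 * B - 3) * card {i. i < numdigits B x \<and> digit B x i = B - 1}"
proof -
  define L where "L = numdigits B x"
  define T where "T = {i. i < L \<and> digit B x i = B - 1}"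
  have digit_sq: "(digit B x i)^2 \<le> (B - 2)^2 + (if i \<in> T then 2 * B - 3 else 0)"
    if "i < L" for i
  proof (cases "digit B x i = B - 1")
    case True
    have "(B - 1)^2 = (B - 2)^2 + (2 * B - 3)"
      using assms by (cases B; cases "B - 1"; simp add: power2_eq_square algebra_simps)
    then show ?thesis using True that by (simp add: T_def)
  next
    case False
    have "digit B x i < B" unfolding digit_def using assms by simp
    then have "digit B x i \<le> B - 2" using False by linarith
    then show ?thesis using False by (simp add: T_def power_mono)
  qed
  have "T \<subseteq> {..<L}" by (auto simp: T_def)
  have "H B x = (\<Sum>i<L. (digit B x i)^2)" by (simp add: H_def L_def)
  also have "\<dots> \<le> (\<Sum>i<L. (B - 2)^2 + (if i \<in> T then 2 * B - 3 else 0))"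
    by (rule sum_mono) (rule digit_sq, simp)
  also have "\<dots> = L * (B - 2)^2 + (2 * B - 3) * card T"
    using \<open>T \<subseteq> {..<L}\<close> by (simp add: sum.distrib sum.If_cases Int_absorb1)
  finally show ?thesis by (simp add: L_def T_def mult.commute)
qed

lemma funpow_H_0: "(H B ^^ n) 0 = 0"
  by (induction n) (simp_all add: H_0)

lemma not_happy_0: "\<not> happy B 0"
  by (simp add: happy_def)

lemma happy_1: "happy B 1" and height_1: "height B 1 = 0"
  by (auto simp: happy_def height_def intro: exI[of _ 0])

lemma funpow_height:
  assumes "happy B x"
  shows "(H B ^^ height B x) x = 1"
  using assms unfolding happy_def height_def by (auto intro: LeastI)

lemma happy_H_iff:
  assumes "x \<noteq> 1"
  shows "happy B (H B x) \<longleftrightarrow> happy B x"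
proof
  assume "happy B (H B x)"
  then obtain n where "(H B ^^ Suc n) x = 1" and "H B x > 0"
    unfolding happy_def by (auto simp: funpow_Suc_right simp del: funpow.simps)
  moreover have "x > 0" using \<open>H B x > 0\<close> H_0 by (cases x) auto
  ultimately show "happy B x" unfolding happy_def by blast
next
  assume "happy B x"
  then obtain n where n: "(H B ^^ n) x = 1" unfolding happy_def by blast
  with assms obtain m where "n = Suc m" by (cases n) auto
  with n have "(H B ^^ m) (H B x) = 1" by (simp add: funpow_Suc_right del: funpow.simps)
  moreover have "H B x > 0" using calculation by (metis funpow_H_0 gr0I zero_neq_one)
  ultimately show "happy B (H B x)" unfolding happy_def by blast
qed

lemma height_H:
  assumes "x \<noteq> 1" and "happy B x"
  shows "height B x = Suc (height B (H B x))"
proof -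
  have "(LEAST a. (H B ^^ a) x = 1) = Suc (LEAST a. (H B ^^ Suc a) x = 1)"
    using funpow_height[OF assms(2)] assms(1) by (intro Least_Suc) auto
  then show ?thesis
    by (simp add: height_def funpow_Suc_right del: funpow.simps)
qed

lemma ex_happy_height:
  assumes "B \<ge> 2"
  shows "\<exists>x. happy B x \<and> height B x = n"
proof (induction n)
  case 0
  show ?case using happy_1 height_1 by blast
next
  case (Suc n)
  then obtain y where y: "happy B y" "height B y = n" by blast
  then have "y > 0" using not_happy_0 by (cases y) auto
  define ds where "ds = 0 # replicate y (1::nat)"
  have ds: "\<forall>d\<in>set ds. d < B" "ds \<noteq> []" "last ds \<noteq> 0"
    using assms \<open>y > 0\<close> by (auto simp: ds_def)
  have "H B (of_digits B ds) = y"
    using H_of_digits[OF assms ds] by (simp add: ds_def sum_list_replicate)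
  moreover have "of_digits B ds \<noteq> 1"
    using assms by (simp add: ds_def)
  ultimately show ?case using y happy_H_iff height_H by metis
qed

lemma gamma_happy_height:
  assumes "B \<ge> 2"
  shows "happy B (gamma B n)" and "height B (gamma B n) = n"
proof -
  have "\<exists>x. x \<ge> 1 \<and> happy B x \<and> height B x = n"
    using ex_happy_height[OF assms, of n] by (auto simp: happy_def Suc_le_eq)
  then have "gamma B n \<ge> 1 \<and> happy B (gamma B n) \<and> height B (gamma B n) = n"
    unfolding gamma_def by (rule LeastI_ex)
  then show "happy B (gamma B n)" and "height B (gamma B n) = n" by auto
qed

lemma gamma_le:
  assumes "happy B x" and "height B x = n"
  shows "gamma B n \<le> x"
  using assms unfolding gamma_def by (intro Least_le) (simp add: happy_def)

lemma gamma_le_H_gamma_Suc: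
  assumes "B \<ge> 2"
  shows "gamma B n \<le> H B (gamma B (Suc n))"
proof -
  let ?x = "gamma B (Suc n)"
  have "?x \<noteq> 1" using gamma_happy_height(2)[OF assms, of "Suc n"] height_1 by auto
  then show ?thesis
    using gamma_happy_height[OF assms] happy_H_iff height_H by (metis gamma_le nat.inject)
qed

lemma gamma_Suc_le:
  assumes "B \<ge> 2" and "H B x = gamma B n" and "x \<noteq> 1"
  shows "gamma B (Suc n) \<le> x"
  using assms gamma_happy_height[OF assms(1)] happy_H_iff height_H gamma_le by metis

lemma ex_pronic_bracket: "\<exists>p::nat. p \<ge> 1 \<and> p * (p - 1) \<le> s \<and> s < p * (p + 1)"
proof (induction s)
  case 0
  show ?case by (intro exI[of _ 1]) simp
next
  case (Suc s)
  then obtain p where p: "p \<ge> 1" "p * (p - 1) \<le> s" "s < p * (p + 1)" by blast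
  show ?case
  proof (cases "Suc s < p * (p + 1)")
    case True
    then show ?thesis using p by (intro exI[of _ p]) auto
  next
    case False
    then have "Suc s = (p + 1) * (p + 1 - 1)" using p by simp
    then show ?thesis by (intro exI[of _ "p + 1"]) (simp add: algebra_simps)
  qed
qed

lemma ex_even_dvd_add:
  fixes m D :: nat
  assumes "odd m"
  shows "\<exists>s. even s \<and> s \<le> 2 * m - 2 \<and> m dvd D + s"
proof -
  define s0 where "s0 = (m - D mod m) mod m"
  have "m > 0" using assms by (cases m) auto
  have "s0 < m" using \<open>m > 0\<close> by (simp add: s0_def)
  have "m dvd D + s0"
  proof (cases "D mod m = 0")
    case True
    then show ?thesis by (simp add: s0_def mod_0_imp_dvd)
  next
    case False
    have "D div m * m + D mod m = D" by (rule div_mult_mod_eq)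
    moreover have "s0 = m - D mod m" using False \<open>m > 0\<close> by (simp add: s0_def)
    ultimately have "D + s0 = D div m * m + m"
      using mod_less_divisor[OF \<open>m > 0\<close>, of D] by linarith
    then show ?thesis by simp
  qed
  show ?thesis
  proof (cases "even s0")
    case True
    moreover have "s0 \<le> 2 * m - 2" using \<open>s0 < m\<close> by linarith
    ultimately show ?thesis using \<open>m dvd D + s0\<close> by blast
  next
    case False
    have "even (s0 + m)" using False assms by simp
    moreover have "s0 + m \<noteq> 2 * m - 1"
    proof
      assume "s0 + m = 2 * m - 1"
      then have "Suc (s0 + m) = 2 * m" using \<open>m > 0\<close> by simp
      then show False using \<open>even (s0 + m)\<close> by (metis even_Suc dvd_triv_left)
    qed
    then have "s0 + m \<le> 2 * m - 2" using \<open>s0 < m\<close> by linarith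
    moreover have "m dvd D + (s0 + m)" using \<open>m dvd D + s0\<close> by (simp add: add.assoc[symmetric])
    ultimately show ?thesis by blast
  qed
qed

text \<open>This makes the number of digits lowered by 1 nonnegative.\<close>

lemma deficit_ineq:
  fixes B p h :: int
  assumes B: "B \<ge> 3" and p: "p \<ge> 1" and h: "0 \<le> h" "h \<le> p - 1"
    and s: "p * (p - 1) + 2 * h \<le> 4 * B - 8"
  shows "(2 * B - 3) * (p + 2 * h) \<le> 3 * (B - 1)^2 + 1 + p * (p - 1) + 2 * h"
proof (cases "2 * p + 1 \<le> B")
  case True
  have "(2 * B - 3) * (p + 2 * h) - p * (p - 1) - 2 * h = (2 * B - 2) * p - p * p + (4 * B - 8) * h"
    by (simp add: algebra_simps)
  also have "\<dots> \<le> (2 * B - 2) * p - p * p + (4 * B - 8) * (p - 1)"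
    using h B by (intro add_left_mono mult_left_mono) auto
  also have "\<dots> = (3 * B - 5) * (2 * p) - p * p - 4 * B + 8"
    by (simp add: algebra_simps)
  also have "\<dots> \<le> (3 * B - 5) * (B - 1) - 4 * B + 8"
  proof -
    have "(3 * B - 5) * (2 * p) \<le> (3 * B - 5) * (B - 1)"
      using True B by (intro mult_left_mono) auto
    moreover have "0 \<le> p * p" by simp
    ultimately show ?thesis by linarith
  qed
  also have "\<dots> \<le> 3 * (B - 1)^2 + 1"
    using B by (simp add: power2_eq_square algebra_simps)
  finally show ?thesis by simp
next
  case False
  have "p \<le> 8"
  proof (rule ccontr)
    assume "\<not> p \<le> 8"
    then have "p * 8 \<le> p * (p - 1)" using p by (intro mult_left_mono) auto
    then show False using s h False by linarith
  qed
  moreover have "B \<le> 16" using False \<open>p \<le> 8\<close> by simp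
  ultimately have "p = 1 \<or> p = 2 \<or> p = 3 \<or> p = 4 \<or> p = 5 \<or> p = 6 \<or> p = 7 \<or> p = 8"
    and "B = 3 \<or> B = 4 \<or> B = 5 \<or> B = 6 \<or> B = 7 \<or> B = 8 \<or> B = 9 \<or> B = 10
      \<or> B = 11 \<or> B = 12 \<or> B = 13 \<or> B = 14 \<or> B = 15 \<or> B = 16"
    using p B by presburger+
  then show ?thesis
    using h s by (elim disjE) (simp_all add: power2_eq_square)
qed

lemma deficit_identity:
  fixes b p h g a :: int
  shows "(b - 1 - p)^2 + h * (b - 3)^2 + g * (b - 2)^2 + a * (b - 1)^2
    = (1 + h + g + a) * (b - 1)^2 - ((2 * b - 3) * (p + 2 * h + g) - (p * (p - 1) + 2 * h))"
  unfolding power2_eq_square by (simp add: ring_distribs)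

text \<open>Lowering a digit B - 1 by j decreases its square by j (2B - 2 - j), which is
  -j (j - 1) modulo 2B - 3.\<close>

lemma ex_pronic_shift_dvd:
  fixes B D :: nat
  assumes B: "B \<ge> 3"
  shows "\<exists>p h. 1 \<le> p \<and> p \<le> B - 1 \<and> h < p \<and> p * (p - 1) + 2 * h \<le> 4 * B - 8
           \<and> 2 * B - 3 dvd D + (p * (p - 1) + 2 * h)"
proof -
  have "odd (2 * B - 3)" using B by simp
  then obtain s where "even s" and "s \<le> 2 * (2 * B - 3) - 2" and "2 * B - 3 dvd D + s"
    using ex_even_dvd_add by blast
  then have s_le: "s \<le> 4 * B - 8" by simp
  obtain p where "p \<ge> 1" and p: "p * (p - 1) \<le> s" "s < p * (p + 1)"
    using ex_pronic_bracket by blast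
  define h where "h = (s - p * (p - 1)) div 2"
  have "even (p * (p - 1))" by (cases "even p") (auto simp: even_diff_nat)
  then have s_eq: "s = p * (p - 1) + 2 * h"
    using \<open>even s\<close> p(1) by (simp add: h_def)
  have "h < p"
    using p(2) \<open>p \<ge> 1\<close> unfolding s_eq by (cases p) (auto simp: algebra_simps)
  have "p \<le> B - 1"
  proof (rule ccontr)
    assume "\<not> p \<le> B - 1"
    then have "B * (B - 1) \<le> p * (p - 1)" by (intro mult_mono) auto
    then have "B * (B - 1) \<le> 4 * B - 8" using p(1) s_le by linarith
    moreover have "4 * B - 8 < B * (B - 1)"
    proof (cases "B \<ge> 5")
      case True
      then have "4 * B \<le> B * (B - 1)" by simp
      then show ?thesis using True by linarith
    next
      case False
      then have "B = 3 \<or> B = 4" using B by linarith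
      then show ?thesis by auto
    qed
    ultimately show False by linarith
  qed
  then show ?thesis
    using \<open>p \<ge> 1\<close> \<open>h < p\<close> s_le \<open>2 * B - 3 dvd D + s\<close> unfolding s_eq by blast
qed

lemma ex_deficit_decomposition:
  fixes B D :: nat
  assumes B: "B \<ge> 3" and D: "3 * (B - 1)^2 < D" "D \<le> 4 * (B - 1)^2"
  shows "\<exists>p h g. 1 \<le> p \<and> p \<le> B - 1 \<and> h + g \<le> 2 * B - 1
           \<and> int (2 * B - 3) * (int p + 2 * int h + int g) = int D + int p * (int p - 1) + 2 * int h"
proof -
  define m where "m = 2 * B - 3"
  obtain p h where p: "1 \<le> p" "p \<le> B - 1" and "h < p"
    and s_le: "p * (p - 1) + 2 * h \<le> 4 * B - 8" and "m dvd D + (p * (p - 1) + 2 * h)"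
    using ex_pronic_shift_dvd[OF B] unfolding m_def by blast
  define s where "s = p * (p - 1) + 2 * h"
  have int_s: "int s = int p * (int p - 1) + 2 * int h"
    using p by (simp add: s_def of_nat_diff)
  have "int ((B - 1)^2) = (int B - 1)^2" using B by (simp add: of_nat_diff)
  then have int_D: "3 * (int B - 1)^2 < int D" "int D \<le> 4 * (int B - 1)^2"
    using D by linarith+
  define M where "M = (D + s) div m"
  have mM: "int m * int M = int D + int s"
    using \<open>m dvd D + _\<close> by (metis M_def s_def dvd_mult_div_cancel of_nat_add of_nat_mult)
  have int_m: "int m = 2 * int B - 3" using B by (simp add: m_def)
  have "int s \<le> 4 * int B - 8" using s_le B unfolding s_def by linarith
  then have "int p * (int p - 1) + 2 * int h \<le> 4 * int B - 8" by (simp only: int_s)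
  then have "int m * (int p + 2 * int h) \<le> 3 * (int B - 1)^2 + 1 + int s"
    using B p \<open>h < p\<close> deficit_ineq[of "int B" "int p" "int h"]
    by (simp add: int_m int_s add.assoc)
  also have "\<dots> \<le> int m * int M" using int_D by (simp add: mM)
  finally have "p + 2 * h \<le> M"
    using int_m B mult_le_cancel_left_pos[of "int m" "int p + 2 * int h" "int M"] by simp
  have "int m * int M \<le> 4 * (int B - 1)^2 + 4 * int B - 8"
    using int_D \<open>int s \<le> 4 * int B - 8\<close> by (simp add: mM)
  also have "\<dots> < int m * (2 * int B + 1)"
    using B by (simp add: m_def of_nat_diff power2_eq_square algebra_simps)
  finally have "M \<le> 2 * B" using B by (simp add: m_def)
  define g where "g = M - p - 2 * h"
  have "h + g \<le> 2 * B - 1"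
    using \<open>p + 2 * h \<le> M\<close> \<open>M \<le> 2 * B\<close> p unfolding g_def by linarith
  moreover have "int m * (int p + 2 * int h + int g) = int D + int p * (int p - 1) + 2 * int h"
    using \<open>p + 2 * h \<le> M\<close> mM by (simp add: g_def int_s of_nat_diff algebra_simps)
  ultimately show ?thesis
    using p unfolding m_def by blast
qed

lemma ex_digits_sum_squares:
  fixes B q r :: nat
  assumes B: "B \<ge> 3" and r: "r < (B - 1)^2" and q: "q \<ge> 2 * B - 3"
  shows "\<exists>ds. (\<forall>d\<in>set ds. d < B) \<and> ds \<noteq> [] \<and> last ds \<noteq> 0 \<and> length ds = q + 4
           \<and> (\<Sum>d\<leftarrow>ds. d^2) = q * (B - 1)^2 + r"
proof -
  define D where "D = 4 * (B - 1)^2 - r"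
  have "3 * (B - 1)^2 < D" and "D \<le> 4 * (B - 1)^2" using r by (simp_all add: D_def)
  then obtain p h g where p: "1 \<le> p" "p \<le> B - 1" and "h + g \<le> 2 * B - 1"
    and deficit: "int (2 * B - 3) * (int p + 2 * int h + int g) = int D + int p * (int p - 1) + 2 * int h"
    using ex_deficit_decomposition[OF B] by blast
  have "h + g \<le> q + 2" using \<open>h + g \<le> 2 * B - 1\<close> q by linarith
  define a where "a = q + 3 - h - g"
  define ds where "ds = (B - 1 - p) # replicate h (B - 3) @ replicate g (B - 2) @ replicate a (B - 1)"
  have "length ds = q + 4" using \<open>h + g \<le> q + 2\<close> by (simp add: ds_def a_def)
  moreover have "(\<Sum>d\<leftarrow>ds. d^2) = q * (B - 1)^2 + r"
  proof -
    have "int (\<Sum>d\<leftarrow>ds. d^2)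
        = (int B - 1 - int p)^2 + int h * (int B - 3)^2 + int g * (int B - 2)^2 + int a * (int B - 1)^2"
      using B p by (simp add: ds_def sum_list_replicate of_nat_diff)
    also have "\<dots> = (1 + int h + int g + int a) * (int B - 1)^2 - int D"
      using deficit B by (simp add: deficit_identity of_nat_diff)
    also have "\<dots> = int (q * (B - 1)^2 + r)"
      using r B \<open>h + g \<le> q + 2\<close> by (simp add: a_def D_def of_nat_diff algebra_simps)
    finally show ?thesis by linarith
  qed
  moreover have "\<forall>d\<in>set ds. d < B" and "ds \<noteq> []" and "last ds \<noteq> 0"
    using B \<open>h + g \<le> q + 2\<close> by (auto simp: ds_def a_def)
  ultimately show ?thesis by blast
qed

lemma numdigits_gamma_Suc_le:
  assumes B: "B \<ge> 3" and q: "gamma B n div (B - 1)^2 \<ge> 2 * B - 3"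
  shows "numdigits B (gamma B (Suc n)) \<le> gamma B n div (B - 1)^2 + 4"
proof -
  define q where "q = gamma B n div (B - 1)^2"
  define r where "r = gamma B n mod (B - 1)^2"
  have "r < (B - 1)^2" using B by (simp add: r_def)
  then obtain ds where ds: "\<forall>d\<in>set ds. d < B" "ds \<noteq> []" "last ds \<noteq> 0"
    and "length ds = q + 4" and sum_ds: "(\<Sum>d\<leftarrow>ds. d^2) = q * (B - 1)^2 + r"
    using ex_digits_sum_squares[OF B] q unfolding q_def by blast
  have "gamma B n = q * (B - 1)^2 + r"
    unfolding q_def r_def by (rule div_mult_mod_eq[symmetric])
  then have "H B (of_digits B ds) = gamma B n"
    using H_of_digits[OF _ ds] B sum_ds by simp
  moreover have "of_digits B ds \<noteq> 1"
  proof -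
    have "B ^ 1 \<le> B ^ (length ds - 1)"
      using B \<open>length ds = q + 4\<close> by (intro power_increasing) auto
    also have "\<dots> \<le> of_digits B ds" using B ds by (intro power_le_of_digits) auto
    finally show ?thesis using B by auto
  qed
  ultimately have "gamma B (Suc n) \<le> of_digits B ds" using B by (intro gamma_Suc_le) auto
  also have "\<dots> < B ^ (q + 4)" using of_digits_less[OF ds(1)] \<open>length ds = q + 4\<close> by simp
  finally show ?thesis unfolding q_def by (rule numdigits_le)
qed

lemma sum_squares_count_bound:
  fixes B q t :: nat
  assumes B: "B \<ge> 2" and le: "q * (B - 1)^2 \<le> (B - 2)^2 * (q + 4) + (2 * B - 3) * t"
  shows "q \<le> t + (2 * B - 4)"
proof -
  define b where "b = int B"
  have casts: "int (B - 1) = b - 1" "int (B - 2) = b - 2" "int (2 * B - 3) = 2 * b - 3"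
    using B by (simp_all add: b_def of_nat_diff)
  have "int (q * (B - 1)^2) \<le> int ((B - 2)^2 * (q + 4) + (2 * B - 3) * t)"
    using le by (simp only: of_nat_le_iff)
  then have le_int: "int q * (b - 1)^2 \<le> (b - 2)^2 * (int q + 4) + (2 * b - 3) * int t"
    by (simp only: of_nat_add of_nat_mult of_nat_power of_nat_numeral casts)
  have "(2 * b - 3) * (int q - int t - (2 * b - 4))
      = (int q * (b - 1)^2 - ((b - 2)^2 * (int q + 4) + (2 * b - 3) * int t)) - (2 * b - 4)"
    by (simp add: power2_eq_square algebra_simps)
  also have "\<dots> \<le> 0" using le_int B by (simp add: b_def)
  finally have "int q - int t - (2 * b - 4) \<le> 0"
    using B by (simp add: b_def mult_le_0_iff)
  then show ?thesis using B by (simp add: b_def)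
qed

theorem corollary2p4:
  fixes B \<eta> :: nat
  assumes "B \<ge> 2"
  shows "int (tcount B (\<eta> + 1))
           \<ge> \<lfloor>real (gamma B \<eta>) / real ((B - 1)^2)\<rfloor> - (2 * int B - 4)"
proof -
  define q where "q = gamma B \<eta> div (B - 1)^2"
  define x where "x = gamma B (Suc \<eta>)"
  have "\<lfloor>real (gamma B \<eta>) / real ((B - 1)^2)\<rfloor> = int q"
    unfolding q_def by (rule floor_divide_of_nat_eq)
  moreover have "q \<le> tcount B (\<eta> + 1) + (2 * B - 4)"
  proof (cases "q \<le> 2 * B - 4")
    case False
    have "numdigits B x \<le> q + 4 \<or> B = 2"
      using numdigits_gamma_Suc_le[of B \<eta>] False assms unfolding q_def x_def by linarith
    then have "(B - 2)^2 * numdigits B x \<le> (B - 2)^2 * (q + 4)" by auto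
    moreover have "q * (B - 1)^2 \<le> H B x"
      unfolding q_def x_def
      by (rule le_trans[OF div_times_less_eq_dividend gamma_le_H_gamma_Suc[OF assms]])
    moreover have tc: "tcount B (\<eta> + 1) = card {i. i < numdigits B x \<and> digit B x i = B - 1}"
      by (simp add: tcount_def x_def)
    ultimately show ?thesis
      unfolding tc using H_le_digit_count[OF assms, of x] assms
      by (intro sum_squares_count_bound) linarith+
  qed simp
  ultimately show ?thesis using assms by linarith
qed

end
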